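(* Let $\mathcal{X}\subseteq\mathbb{R}^n$, $\mathcal{Z}=\mathcal{X}\times\mathcal{Y}$, $\rho$ a probability distribution on $\mathcal{Z}$, $d$ a metric on $\mathcal{X}$, $\mathcal{W}\subseteq\mathbb{R}^p$ compact, and $\ell:\mathcal{Z}\times\mathcal{W}\to\mathbb{R}^+$ differentiable in $x$ and convex with respect to the input, i.e. for all $x,x'\in\mathcal{X}$, $y\in\mathcal{Y}$, $w\in\mathcal{W}$, $$\ell((x',y),w)-\ell((x,y),w)\ge\langle\nabla_x\ell((x,y),w),x'-x\rangle.$$ Define $R^*_\epsilon=\inf_{w\in\mathcal{W}}\mathbb{E}_{(x,y)\sim\rho}\big[\sup_{x':d(x,x')\le\epsilon}\ell((x',y),w)\big]$. Then $$R^*_\epsilon\ge R^*_0+\inf_{w\in\mathcal{W}}\mathbb{E}_{z=(x,y)\sim\rho}\Big[\sup_{x':d(x,x')\le\epsilon}\langle\nabla_x\ell((x,y),w),x'-x\rangle\Big].$$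
   Context: $R^*_0=\inf_{w}\mathbb{E}_{z\sim\rho}\ell(z,w)$ is the optimal standard risk. *)

theory Defs
  imports "HOL-Probability.Probability"
begin

definition metric_on :: "'x set \<Rightarrow> ('x \<Rightarrow> 'x \<Rightarrow> real) \<Rightarrow> bool" where
  "metric_on X d \<longleftrightarrow>
     (\<forall>x\<in>X. \<forall>y\<in>X. 0 \<le> d x y \<and> (d x y = 0 \<longleftrightarrow> x = y) \<and> d x y = d y x) \<and>
     (\<forall>x\<in>X. \<forall>y\<in>X. \<forall>z\<in>X. d x z \<le> d x y + d y z)"

definition std_risk ::
  "('x \<times> 'y \<Rightarrow> 'w \<Rightarrow> real) \<Rightarrow> ('x \<times> 'y) measure \<Rightarrow> 'w set \<Rightarrow> ennreal" where
  "std_risk l M W = (INF w\<in>W. \<integral>\<^sup>+ z. ennreal (l z w) \<partial>M)"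

definition adv_risk ::
  "('x \<times> 'y \<Rightarrow> 'w \<Rightarrow> real) \<Rightarrow> ('x \<Rightarrow> 'x \<Rightarrow> real) \<Rightarrow> 'x set \<Rightarrow>
   ('x \<times> 'y) measure \<Rightarrow> 'w set \<Rightarrow> real \<Rightarrow> ennreal" where
  "adv_risk l d X M W eps =
     (INF w\<in>W. \<integral>\<^sup>+ z. (SUP x'\<in>{x'\<in>X. d (fst z) x' \<le> eps}. ennreal (l (x', snd z) w)) \<partial>M)"

definition grad_term ::
  "('x::real_inner \<Rightarrow> 'y \<Rightarrow> 'w \<Rightarrow> 'x) \<Rightarrow> ('x \<Rightarrow> 'x \<Rightarrow> real) \<Rightarrow> 'x set \<Rightarrow>
   ('x \<times> 'y) measure \<Rightarrow> 'w set \<Rightarrow> real \<Rightarrow> ennreal" where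
  "grad_term G d X M W eps =
     (INF w\<in>W. \<integral>\<^sup>+ z. (SUP x'\<in>{x'\<in>X. d (fst z) x' \<le> eps}.
          ennreal (inner (G (fst z) (snd z) w) (x' - fst z))) \<partial>M)"

end

theory Submission
  imports Defs
begin

text \<open>
  Convexity in the input gives, pointwise in z = (x, y) and w,
  \<open>l((x', y), w) \<ge> l((x, y), w) + \<langle>\<nabla>\<^sub>x l((x, y), w), x' - x\<rangle>\<close> for every x' in the
  \<open>\<epsilon>\<close>-ball around x; taking suprema over the ball (which contains x), integrating,
  and splitting the integral of the sum gives the bound for each fixed w, and
  hence for the infima over W.
\<close>

text \<open>Unlike \<open>nn_integral_add\<close>, no measurability is required: the supremum
  integrands of the adversarial risk need not be measurable.\<close>

lemma nn_integral_superadditive: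
  fixes f g :: "'a \<Rightarrow> ennreal"
  shows "integral\<^sup>N M f + integral\<^sup>N M g \<le> (\<integral>\<^sup>+x. f x + g x \<partial>M)"
proof -
  let ?A = "{s. simple_function M s \<and> s \<le> f}"
  let ?B = "{t. simple_function M t \<and> t \<le> g}"
  have "(\<lambda>_. 0) \<in> ?A" "(\<lambda>_. 0) \<in> ?B"
    by (auto simp: le_fun_def)
  then have nonempty: "?A \<noteq> {}" "?B \<noteq> {}"
    by blast+
  have "integral\<^sup>N M f + integral\<^sup>N M g = (SUP s\<in>?A. integral\<^sup>S M s + integral\<^sup>N M g)"
    unfolding nn_integral_def[of M f] using nonempty by (simp add: ennreal_SUP_add_left)
  also have "\<dots> = (SUP s\<in>?A. SUP t\<in>?B. integral\<^sup>S M s + integral\<^sup>S M t)"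
    unfolding nn_integral_def[of M g] using nonempty by (simp add: ennreal_SUP_add_right)
  also have "\<dots> \<le> (\<integral>\<^sup>+x. f x + g x \<partial>M)"
  proof (intro SUP_least)
    fix s t assume s: "s \<in> ?A" and t: "t \<in> ?B"
    have "integral\<^sup>S M s + integral\<^sup>S M t = (\<integral>\<^sup>Sx. s x + t x \<partial>M)"
      using s t by (simp add: simple_integral_add)
    also have "\<dots> \<le> (\<integral>\<^sup>+x. f x + g x \<partial>M)"
      unfolding nn_integral_def
      by (rule SUP_upper) (use s t in \<open>auto simp: le_fun_def intro: add_mono\<close>)
    finally show "integral\<^sup>S M s + integral\<^sup>S M t \<le> (\<integral>\<^sup>+x. f x + g x \<partial>M)" .
  qed
  finally show ?thesis .
qed

lemma ennreal_add_SUP_le_SUP_of_increment_bound: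
  fixes f h :: "'a \<Rightarrow> real"
  assumes "x \<in> B" and "0 \<le> f x"
    and increment: "\<And>x'. x' \<in> B \<Longrightarrow> h x' \<le> f x' - f x"
  shows "ennreal (f x) + (SUP x'\<in>B. ennreal (h x')) \<le> (SUP x'\<in>B. ennreal (f x'))"
proof -
  have "ennreal (f x) + (SUP x'\<in>B. ennreal (h x')) = (SUP x'\<in>B. ennreal (f x) + ennreal (h x'))"
    using \<open>x \<in> B\<close> by (intro ennreal_SUP_add_right) blast
  also have "\<dots> \<le> (SUP x'\<in>B. ennreal (f x'))"
  proof (rule SUP_mono)
    fix x' assume "x' \<in> B"
    show "\<exists>x''\<in>B. ennreal (f x) + ennreal (h x') \<le> ennreal (f x'')"
    proof (cases "0 \<le> h x'")
      case True
      then have "ennreal (f x) + ennreal (h x') = ennreal (f x + h x')"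
        using \<open>0 \<le> f x\<close> by (simp add: ennreal_plus)
      also have "\<dots> \<le> ennreal (f x')"
        using increment[OF \<open>x' \<in> B\<close>] by (intro ennreal_leI) simp
      finally show ?thesis
        using \<open>x' \<in> B\<close> by blast
    next
      case False
      then have "ennreal (h x') = 0"
        by (simp add: ennreal_eq_0_iff)
      then show ?thesis
        using \<open>x \<in> B\<close> by auto
    qed
  qed
  finally show ?thesis .
qed

text \<open>Only nonnegativity of \<open>l\<close>, the first-order convexity inequality and \<open>d x x = 0\<close>
  are used; the differentiability hypothesis merely identifies \<open>G\<close> as the input gradient.\<close>

theorem theorem11:
  fixes X :: "'x::euclidean_space set" and Y :: "'y set"
    and M :: "('x \<times> 'y) measure"
    and d :: "'x \<Rightarrow> 'x \<Rightarrow> real"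
    and W :: "'w::euclidean_space set"
    and l :: "'x \<times> 'y \<Rightarrow> 'w \<Rightarrow> real"
    and G :: "'x \<Rightarrow> 'y \<Rightarrow> 'w \<Rightarrow> 'x"
    and eps :: real
  assumes "prob_space M"
    and "space M \<subseteq> X \<times> Y"
    and "metric_on X d"
    and "compact W"
    and "\<And>z w. z \<in> X \<times> Y \<Longrightarrow> w \<in> W \<Longrightarrow> 0 \<le> l z w"
    and "\<And>x y w. x \<in> X \<Longrightarrow> y \<in> Y \<Longrightarrow> w \<in> W \<Longrightarrow>
           ((\<lambda>x'. l (x', y) w) has_derivative (\<lambda>h. inner (G x y w) h)) (at x)"
    and "\<And>x x' y w. x \<in> X \<Longrightarrow> x' \<in> X \<Longrightarrow> y \<in> Y \<Longrightarrow> w \<in> W \<Longrightarrow>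
           l (x', y) w - l (x, y) w \<ge> inner (G x y w) (x' - x)"
    and "0 \<le> eps"
  shows "adv_risk l d X M W eps \<ge> std_risk l M W + grad_term G d X M W eps"
proof -
  let ?ball = "\<lambda>x. {x'\<in>X. d x x' \<le> eps}"
  let ?sup_loss = "\<lambda>z w. SUP x'\<in>?ball (fst z). ennreal (l (x', snd z) w)"
  let ?sup_grad = "\<lambda>z w. SUP x'\<in>?ball (fst z). ennreal (inner (G (fst z) (snd z) w) (x' - fst z))"
  have pointwise: "ennreal (l z w) + ?sup_grad z w \<le> ?sup_loss z w" if z: "z \<in> space M" and "w \<in> W" for z w
  proof -
    obtain x y where z: "z = (x, y)" "x \<in> X" "y \<in> Y"
      using z assms(2) by auto
    then have "d x x = 0"
      using assms(3) unfolding metric_on_def by blast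
    then have "x \<in> ?ball x"
      using \<open>x \<in> X\<close> assms(8) by simp
    then show ?thesis
      unfolding z(1) fst_conv snd_conv using z \<open>w \<in> W\<close> assms(5,7)
      by (intro ennreal_add_SUP_le_SUP_of_increment_bound[where f = "\<lambda>x'. l (x', y) w"]) auto
  qed
  have "std_risk l M W + grad_term G d X M W eps \<le> (\<integral>\<^sup>+ z. ?sup_loss z w \<partial>M)" if "w \<in> W" for w
  proof -
    have "std_risk l M W + grad_term G d X M W eps
        \<le> (\<integral>\<^sup>+ z. ennreal (l z w) \<partial>M) + (\<integral>\<^sup>+ z. ?sup_grad z w \<partial>M)"
      unfolding std_risk_def grad_term_def using that by (intro add_mono INF_lower)
    also have "\<dots> \<le> (\<integral>\<^sup>+ z. ennreal (l z w) + ?sup_grad z w \<partial>M)"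
      by (rule nn_integral_superadditive)
    also have "\<dots> \<le> (\<integral>\<^sup>+ z. ?sup_loss z w \<partial>M)"
      using pointwise that by (intro nn_integral_mono) blast
    finally show ?thesis .
  qed
  then show ?thesis
    unfolding adv_risk_def by (auto intro: INF_greatest)
qed

end
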